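(* Let $\mathcal{X}=\{1,\ldots,n\}$, let $p=(p(1),\ldots,p(n))$ be a probability vector with $p(1)\geq\cdots\geq p(n)>0$ (the prior of $X$), and let $k<n$ be a positive integer. Let $j^*:=\min\{j:1\leq j\leq k,\ p(j)\leq \sum_{i=j}^n p(i)/(k-j+1)\}$ and $\pi=(\pi_1,\ldots,\pi_k)$ with $\pi_l=p(l)$ for $l\leq j^*-1$ and $\pi_l=\sum_{i=j^*}^n p(i)/(k-j^*+1)$ for $j^*\leq l\leq k$. Let $\mathcal{M}^*$ be the family of all $M\subseteq\mathcal{X}$ with $|M|=k$ and $\{1,\ldots,j^*-1\}\subseteq M$. Then the system $\sum_{M\in\mathcal{M}^*:\,i\in M}v_M=p(i)$ for $i=j^*,\ldots,n$, $v_M\geq0$ for $M\in\mathcal{M}^*$, has a solution, and for any solution $v$ the channel with outputs $\{y_M:M\in\mathcal{M}^*\}$ given by $p(y_M\mid i)=v_M/p(i)$ for $i\in\{j^*,\ldots,n\}\cap M$, $p(y_M\mid i)=v_M(k-j^*+1)/\sum_{j=j^*}^np(j)$ for $i\in\{1,\ldots,j^*-1\}$, and $p(y_M\mid i)=0$ otherwise, is a feasible channel satisfying $H(X\mid Y)=H(\pi)$ for every generalised entropy $(\eta,F)$.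
   Context: Generalised entropy: a pair $(\eta,F)$ where $F$ is a bounded real-valued function on probability vectors of every finite length that is symmetric (unchanged by permuting entries) and expansible (unchanged by appending zero entries), and $\eta$ is a real function, such that either $\eta$ is increasing and $F$ concave, or $\eta$ is decreasing and $F$ convex. $H(q)=\eta(F(q))$ and $H(X\mid Y)=\eta\big(\sum_{y:\,p(y)>0}p(y)F(p_{X\mid y})\big)$ with $p_{X\mid y}=(p(x\mid y))_{x\in\mathcal{X}}$. A channel is a discrete output set $\mathcal{Y}$ with conditional probabilities $p(y\mid x)\geq0$, $\sum_y p(y\mid x)=1$; $Y$ is its output when the input is $X\sim p$, with $p(y)=\sum_x p(x)p(y\mid x)$ and $p(x\mid y)=p(x)p(y\mid x)/p(y)$. The pre-image of $y$ is $\{x:p(y\mid x)>0\}$; the channel is feasible if every pre-image has at most $k$ elements. *)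

theory Defs
  imports Complex_Main "HOL-Library.Multiset"
begin

definition prob_vec :: "real list \<Rightarrow> bool" where
  "prob_vec q \<longleftrightarrow> (\<forall>x\<in>set q. 0 \<le> x) \<and> sum_list q = 1"

definition F_bounded :: "(real list \<Rightarrow> real) \<Rightarrow> bool" where
  "F_bounded F \<longleftrightarrow> (\<exists>B. \<forall>q. prob_vec q \<longrightarrow> \<bar>F q\<bar> \<le> B)"

definition F_symmetric :: "(real list \<Rightarrow> real) \<Rightarrow> bool" where
  "F_symmetric F \<longleftrightarrow> (\<forall>q q'. prob_vec q \<longrightarrow> mset q' = mset q \<longrightarrow> F q' = F q)"

definition F_expansible :: "(real list \<Rightarrow> real) \<Rightarrow> bool" where
  "F_expansible F \<longleftrightarrow> (\<forall>q. prob_vec q \<longrightarrow> F (q @ [0]) = F q)"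

definition F_concave :: "(real list \<Rightarrow> real) \<Rightarrow> bool" where
  "F_concave F \<longleftrightarrow> (\<forall>q r t. prob_vec q \<longrightarrow> prob_vec r \<longrightarrow> length q = length r \<longrightarrow>
      0 \<le> t \<longrightarrow> t \<le> 1 \<longrightarrow>
      t * F q + (1 - t) * F r \<le> F (map2 (\<lambda>a b. t * a + (1 - t) * b) q r))"

definition F_convex :: "(real list \<Rightarrow> real) \<Rightarrow> bool" where
  "F_convex F \<longleftrightarrow> (\<forall>q r t. prob_vec q \<longrightarrow> prob_vec r \<longrightarrow> length q = length r \<longrightarrow>
      0 \<le> t \<longrightarrow> t \<le> 1 \<longrightarrow>
      F (map2 (\<lambda>a b. t * a + (1 - t) * b) q r) \<le> t * F q + (1 - t) * F r)"

definition gen_entropy :: "(real \<Rightarrow> real) \<Rightarrow> (real list \<Rightarrow> real) \<Rightarrow> bool" where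
  "gen_entropy \<eta> F \<longleftrightarrow> F_bounded F \<and> F_symmetric F \<and> F_expansible F \<and>
     ((mono \<eta> \<and> F_concave F) \<or> (antimono \<eta> \<and> F_convex F))"

definition entropy :: "(real \<Rightarrow> real) \<Rightarrow> (real list \<Rightarrow> real) \<Rightarrow> real list \<Rightarrow> real" where
  "entropy \<eta> F q = \<eta> (F q)"

text \<open>A channel with input set {1..n}, output set Y and transition probabilities W x y = p(y|x).\<close>
definition is_channel :: "nat \<Rightarrow> 'b set \<Rightarrow> (nat \<Rightarrow> 'b \<Rightarrow> real) \<Rightarrow> bool" where
  "is_channel n Y W \<longleftrightarrow> (\<forall>x\<in>{1..n}. (\<forall>y\<in>Y. 0 \<le> W x y) \<and> (\<Sum>y\<in>Y. W x y) = 1)"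

definition feasible :: "nat \<Rightarrow> nat \<Rightarrow> 'b set \<Rightarrow> (nat \<Rightarrow> 'b \<Rightarrow> real) \<Rightarrow> bool" where
  "feasible k n Y W \<longleftrightarrow> (\<forall>y\<in>Y. card {x\<in>{1..n}. W x y > 0} \<le> k)"

definition out_prob :: "nat \<Rightarrow> (nat \<Rightarrow> real) \<Rightarrow> (nat \<Rightarrow> 'b \<Rightarrow> real) \<Rightarrow> 'b \<Rightarrow> real" where
  "out_prob n p W y = (\<Sum>x\<in>{1..n}. p x * W x y)"

definition posterior :: "nat \<Rightarrow> (nat \<Rightarrow> real) \<Rightarrow> (nat \<Rightarrow> 'b \<Rightarrow> real) \<Rightarrow> 'b \<Rightarrow> real list" where
  "posterior n p W y = map (\<lambda>x. p x * W x y / out_prob n p W y) [1..<Suc n]"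

definition cond_entropy ::
  "(real \<Rightarrow> real) \<Rightarrow> (real list \<Rightarrow> real) \<Rightarrow> nat \<Rightarrow> (nat \<Rightarrow> real) \<Rightarrow> 'b set \<Rightarrow> (nat \<Rightarrow> 'b \<Rightarrow> real) \<Rightarrow> real" where
  "cond_entropy \<eta> F n p Y W =
     \<eta> (\<Sum>y\<in>{y\<in>Y. out_prob n p W y > 0}. out_prob n p W y * F (posterior n p W y))"

definition jstar :: "nat \<Rightarrow> nat \<Rightarrow> (nat \<Rightarrow> real) \<Rightarrow> nat" where
  "jstar k n p = (LEAST j. 1 \<le> j \<and> j \<le> k \<and> p j \<le> (\<Sum>i=j..n. p i) / real (k - j + 1))"

definition pivec :: "nat \<Rightarrow> nat \<Rightarrow> (nat \<Rightarrow> real) \<Rightarrow> real list" where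
  "pivec k n p = map (\<lambda>l. if l \<le> jstar k n p - 1 then p l
        else (\<Sum>i=jstar k n p..n. p i) / real (k - jstar k n p + 1)) [1..<Suc k]"

definition Mstar :: "nat \<Rightarrow> nat \<Rightarrow> (nat \<Rightarrow> real) \<Rightarrow> nat set set" where
  "Mstar k n p = {M. M \<subseteq> {1..n} \<and> card M = k \<and> {1..jstar k n p - 1} \<subseteq> M}"

definition is_solution :: "nat \<Rightarrow> nat \<Rightarrow> (nat \<Rightarrow> real) \<Rightarrow> (nat set \<Rightarrow> real) \<Rightarrow> bool" where
  "is_solution k n p v \<longleftrightarrow>
     (\<forall>i\<in>{jstar k n p..n}. (\<Sum>M\<in>{M\<in>Mstar k n p. i \<in> M}. v M) = p i) \<and>
     (\<forall>M\<in>Mstar k n p. 0 \<le> v M)"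

text \<open>The channel: output y_M is represented by the set M itself.\<close>
definition chan :: "nat \<Rightarrow> nat \<Rightarrow> (nat \<Rightarrow> real) \<Rightarrow> (nat set \<Rightarrow> real) \<Rightarrow> nat \<Rightarrow> nat set \<Rightarrow> real" where
  "chan k n p v i M =
     (if i \<in> {jstar k n p..n} \<inter> M then v M / p i
      else if i \<in> {1..jstar k n p - 1} then
        v M * real (k - jstar k n p + 1) / (\<Sum>j=jstar k n p..n. p j)
      else 0)"

end

theory Submission
  imports Defs
begin

(*
  Write J for jstar k n p, S for the tail mass p(J) + ... + p(n) and m = k - J + 1.  The tail
  weights p(J), ..., p(n) lie in [0, h] for h = S/m and sum to m h.  Such a vector is a
  nonnegative combination of indicator vectors of m-subsets of the tail: choose an m-set A
  containing every entry equal to h and only positive entries, and subtract c 1_A for the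
  largest c keeping the remainder within [0, h - c]; this creates a new zero or a new entry at
  the cap, so the process stops.  Adding {1, ..., J - 1} to these sets gives the solution v.
  For any solution, output M has probability v_M m / S, and its posterior puts p(i) on i < J,
  S/m on the m points of M in the tail and 0 elsewhere: a rearrangement of \<pi> padded with
  zeros.  Symmetry and expansibility of F give F(p_{X|M}) = F(\<pi>), and the output
  probabilities sum to 1.
*)

definition msubset_mixture :: "'a set \<Rightarrow> nat \<Rightarrow> ('a \<Rightarrow> real) \<Rightarrow> bool" where
  "msubset_mixture N m q \<longleftrightarrow>
     (\<exists>v. (\<forall>A. 0 \<le> v A) \<and> (\<forall>i\<in>N. (\<Sum>A\<in>{A. A \<subseteq> N \<and> card A = m \<and> i \<in> A}. v A) = q i))"

lemma msubset_mixture_zero: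
  assumes "\<forall>i\<in>N. q i = 0"
  shows "msubset_mixture N m q"
  unfolding msubset_mixture_def using assms by (intro exI[of _ "\<lambda>_. 0"]) auto

lemma msubset_mixture_add_indicator:
  assumes mix: "msubset_mixture N m q" and "finite N" "A \<subseteq> N" "card A = m" "0 \<le> c"
  shows "msubset_mixture N m (\<lambda>i. q i + (if i \<in> A then c else 0))"
proof -
  obtain v where v: "\<forall>A. 0 \<le> v A" "\<forall>i\<in>N. (\<Sum>A\<in>{A. A \<subseteq> N \<and> card A = m \<and> i \<in> A}. v A) = q i"
    using mix unfolding msubset_mixture_def by blast
  define v' where "v' = (\<lambda>A'. v A' + (if A' = A then c else 0))"
  have "(\<Sum>A'\<in>{A'. A' \<subseteq> N \<and> card A' = m \<and> i \<in> A'}. v' A') = q i + (if i \<in> A then c else 0)"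
    if "i \<in> N" for i
  proof -
    have "finite {A'. A' \<subseteq> N \<and> card A' = m \<and> i \<in> A'}"
      by (rule finite_subset[of _ "Pow N"]) (use \<open>finite N\<close> in auto)
    then show ?thesis
      using v(2) that assms(3,4) unfolding v'_def by (simp add: sum.distrib)
  qed
  moreover have "\<forall>A'. 0 \<le> v' A'" using v(1) \<open>0 \<le> c\<close> unfolding v'_def by simp
  ultimately show ?thesis unfolding msubset_mixture_def by blast
qed

lemma exists_peeling_set:
  assumes "finite N" and bounds: "\<forall>i\<in>N. 0 \<le> q i \<and> q i \<le> h" and "0 < h"
    and mass: "sum q N = real m * h"
  obtains A where "A \<subseteq> N" "card A = m" "\<forall>i\<in>N. q i = h \<longrightarrow> i \<in> A" "\<forall>i\<in>A. 0 < q i"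
proof -
  define T where "T = {i\<in>N. q i = h}"
  define P where "P = {i\<in>N. 0 < q i}"
  have "T \<subseteq> P" "finite P" unfolding T_def P_def using \<open>0 < h\<close> \<open>finite N\<close> by auto
  have "real (card T) * h = sum q T" unfolding T_def by simp
  also have "\<dots> \<le> sum q N"
    using \<open>finite N\<close> bounds by (intro sum_mono2) (auto simp: T_def)
  finally have "card T \<le> m" using mass \<open>0 < h\<close> by simp
  have "sum q N = sum q P"
    unfolding P_def using \<open>finite N\<close> bounds by (intro sum.mono_neutral_right) force+
  also have "\<dots> \<le> real (card P) * h"
    using sum_mono[of P q "\<lambda>_. h"] bounds unfolding P_def by auto
  finally have "m \<le> card P" using mass \<open>0 < h\<close> by simp
  then have "m - card T \<le> card (P - T)"
    using \<open>T \<subseteq> P\<close> \<open>finite P\<close> by (simp add: card_Diff_subset finite_subset)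
  then obtain A0 where A0: "A0 \<subseteq> P - T" "card A0 = m - card T"
    by (meson obtain_subset_with_card_n)
  have "finite T" "finite A0" using \<open>T \<subseteq> P\<close> A0(1) \<open>finite P\<close> finite_subset by blast+
  then have "card (T \<union> A0) = m"
    using A0 \<open>card T \<le> m\<close> by (subst card_Un_disjoint) auto
  moreover have "T \<union> A0 \<subseteq> P" using A0(1) \<open>T \<subseteq> P\<close> by blast
  ultimately show thesis by (intro that[of "T \<union> A0"]) (auto simp: P_def T_def)
qed

lemma exists_peeling_weight:
  fixes q :: "'a \<Rightarrow> real"
  assumes "finite N" "A \<subseteq> N" "A \<noteq> {}" and pos: "\<forall>i\<in>A. 0 < q i"
    and top: "\<forall>i\<in>N. q i \<le> h \<and> (q i = h \<longrightarrow> i \<in> A)"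
  obtains c where "0 < c" "\<forall>i\<in>A. c \<le> q i" "\<forall>i\<in>N - A. c \<le> h - q i"
    "(\<exists>i\<in>A. q i = c) \<or> (\<exists>i\<in>N - A. q i = h - c)"
proof -
  define L where "L = q ` A \<union> (\<lambda>i. h - q i) ` (N - A)"
  have "finite L" "L \<noteq> {}" unfolding L_def using assms(1-3) finite_subset by auto
  moreover have "\<forall>i\<in>N - A. 0 < h - q i" using top by force
  then have "\<forall>x\<in>L. 0 < x" unfolding L_def using pos by blast
  ultimately have "0 < Min L" "Min L \<in> L" by simp_all
  moreover have "\<forall>x\<in>L. Min L \<le> x" using \<open>finite L\<close> by simp
  ultimately show thesis by (intro that[of "Min L"]) (auto simp: L_def)
qed

lemma peeling_decreases_measure:
  fixes q :: "'a \<Rightarrow> real"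
  assumes "finite N" "A \<subseteq> N" "0 < c" and hit: "(\<exists>i\<in>A. q i = c) \<or> (\<exists>i\<in>N - A. q i = h - c)"
    and q': "q' = (\<lambda>i. q i - (if i \<in> A then c else 0))"
  shows "card {i\<in>N. 0 < q' i} + card {i\<in>N. q' i < h - c} < card {i\<in>N. 0 < q i} + card {i\<in>N. q i < h}"
proof -
  have sub: "{i\<in>N. 0 < q' i} \<subseteq> {i\<in>N. 0 < q i}" "{i\<in>N. q' i < h - c} \<subseteq> {i\<in>N. q i < h}"
    using \<open>0 < c\<close> unfolding q' by auto
  have fin: "finite {i\<in>N. 0 < q i}" "finite {i\<in>N. q i < h}" using \<open>finite N\<close> by auto
  have "card {i\<in>N. 0 < q' i} < card {i\<in>N. 0 < q i} \<or> card {i\<in>N. q' i < h - c} < card {i\<in>N. q i < h}"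
    using hit
  proof
    assume "\<exists>i\<in>A. q i = c"
    then obtain i where "i \<in> A" "q i = c" by blast
    then have "i \<in> {i\<in>N. 0 < q i} - {i\<in>N. 0 < q' i}" using assms(2,3) unfolding q' by auto
    then have "{i\<in>N. 0 < q' i} \<subset> {i\<in>N. 0 < q i}" using sub(1) by blast
    then show ?thesis using psubset_card_mono[OF fin(1)] by blast
  next
    assume "\<exists>i\<in>N - A. q i = h - c"
    then obtain i where "i \<in> N - A" "q i = h - c" by blast
    then have "i \<in> {i\<in>N. q i < h} - {i\<in>N. q' i < h - c}" using \<open>0 < c\<close> unfolding q' by auto
    then have "{i\<in>N. q' i < h - c} \<subset> {i\<in>N. q i < h}" using sub(2) by blast
    then show ?thesis using psubset_card_mono[OF fin(2)] by blast
  qed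
  moreover have "card {i\<in>N. 0 < q' i} \<le> card {i\<in>N. 0 < q i}" "card {i\<in>N. q' i < h - c} \<le> card {i\<in>N. q i < h}"
    using sub fin by (simp_all add: card_mono)
  ultimately show ?thesis by linarith
qed

theorem msubset_mixture_if_bounded:
  assumes "finite N" and "\<forall>i\<in>N. 0 \<le> q i \<and> q i \<le> h" and "sum q N = real m * h"
  shows "msubset_mixture N m q"
  using assms(2,3)
proof (induction "card {i\<in>N. 0 < q i} + card {i\<in>N. q i < h}" arbitrary: q h rule: less_induct)
  case (less q h)
  show ?case
  proof (cases "\<forall>i\<in>N. q i = 0")
    case True
    then show ?thesis by (rule msubset_mixture_zero)
  next
    case False
    then obtain a where a: "a \<in> N" "0 < q a" using less.prems(1) by force
    then have "0 < h" using less.prems(1) by force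
    have "q a \<le> sum q N"
      using a \<open>finite N\<close> less.prems(1) by (intro member_le_sum) auto
    then have "0 < m" using a less.prems(2) by (cases m) auto
    obtain A where A: "A \<subseteq> N" "card A = m" "\<forall>i\<in>N. q i = h \<longrightarrow> i \<in> A" "\<forall>i\<in>A. 0 < q i"
      using exists_peeling_set[OF \<open>finite N\<close> less.prems(1) \<open>0 < h\<close> less.prems(2)] .
    have "A \<noteq> {}" using A(2) \<open>0 < m\<close> by auto
    then obtain c where c: "0 < c" "\<forall>i\<in>A. c \<le> q i" "\<forall>i\<in>N - A. c \<le> h - q i"
      "(\<exists>i\<in>A. q i = c) \<or> (\<exists>i\<in>N - A. q i = h - c)"
      using exists_peeling_weight[OF \<open>finite N\<close> A(1)] A(3,4) less.prems(1) by blast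
    define q' where "q' = (\<lambda>i. q i - (if i \<in> A then c else 0))"
    have bounds': "\<forall>i\<in>N. 0 \<le> q' i \<and> q' i \<le> h - c"
      using c(2,3) less.prems(1) A(1) unfolding q'_def by force
    have "sum q' N = sum q N - real m * c"
      using A(1,2) \<open>finite N\<close>
      by (simp add: q'_def sum_subtractf sum.If_cases Int_absorb1)
    then have mass': "sum q' N = real m * (h - c)"
      using less.prems(2) by (simp add: algebra_simps)
    have "card {i\<in>N. 0 < q' i} + card {i\<in>N. q' i < h - c}
        < card {i\<in>N. 0 < q i} + card {i\<in>N. q i < h}"
      using \<open>finite N\<close> A(1) c(1,4) q'_def by (rule peeling_decreases_measure)
    then have "msubset_mixture N m q'"
      using less.hyps bounds' mass' by blast
    from this \<open>finite N\<close> A(1,2)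
    have "msubset_mixture N m (\<lambda>i. q' i + (if i \<in> A then c else 0))"
      by (rule msubset_mixture_add_indicator) (use c(1) in simp)
    then show ?thesis unfolding q'_def by simp
  qed
qed

lemma F_append_zeros:
  assumes "F_expansible F" "prob_vec q"
  shows "F (q @ replicate t 0) = F q"
proof (induction t)
  case (Suc t)
  have "prob_vec (q @ replicate t 0)"
    using assms(2) unfolding prob_vec_def by (auto simp: sum_list_replicate)
  then have "F ((q @ replicate t 0) @ [0]) = F (q @ replicate t 0)"
    using assms(1) unfolding F_expansible_def by blast
  then show ?case using Suc by (simp add: replicate_append_same[symmetric])
qed simp

lemma F_eq_if_mset_eq_append_zeros:
  assumes "F_symmetric F" "F_expansible F" "prob_vec q" "mset q' = mset q + replicate_mset t 0"
  shows "F q' = F q"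
proof -
  have "prob_vec (q @ replicate t 0)"
    using assms(3) unfolding prob_vec_def by (auto simp: sum_list_replicate)
  moreover have "mset q' = mset (q @ replicate t 0)" using assms(4) by simp
  ultimately have "F q' = F (q @ replicate t 0)" using assms(1) unfolding F_symmetric_def by blast
  also have "\<dots> = F q" using assms(2,3) by (rule F_append_zeros)
  finally show ?thesis .
qed

lemma mset_map_upt_Suc: "mset (map g [1..<Suc n]) = image_mset g (mset_set {1..n})"
  by (simp only: mset_map mset_upt atLeastLessThanSuc_atLeastAtMost)

locale ordered_prior =
  fixes n k :: nat and p :: "nat \<Rightarrow> real"
  assumes k_pos: "0 < k" and k_less_n: "k < n"
    and p_sum: "(\<Sum>i=1..n. p i) = 1"
    and p_antimono: "\<And>i j. 1 \<le> i \<Longrightarrow> i \<le> j \<Longrightarrow> j \<le> n \<Longrightarrow> p j \<le> p i"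
    and p_last_pos: "0 < p n"
begin

abbreviation "jst \<equiv> jstar k n p"
abbreviation "head \<equiv> {1..jst - 1}"
abbreviation "tail \<equiv> {jst..n}"
abbreviation "tail_mass \<equiv> \<Sum>i=jst..n. p i"
abbreviation "tail_slots \<equiv> k - jst + 1"

lemma p_pos: "i \<in> {1..n} \<Longrightarrow> 0 < p i"
  using p_antimono[of i n] p_last_pos by auto

lemma jstar_props: "1 \<le> jst" "jst \<le> k" "p jst \<le> tail_mass / tail_slots"
proof -
  have "(\<Sum>i=k..n. p i) = p k + (\<Sum>i=Suc k..n. p i)"
    using k_less_n by (simp add: sum.atLeast_Suc_atMost)
  moreover have "0 \<le> (\<Sum>i=Suc k..n. p i)" using p_pos by (intro sum_nonneg) (auto intro: less_imp_le)
  ultimately have "p k \<le> (\<Sum>i=k..n. p i) / real (k - k + 1)" by simp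
  then have "1 \<le> jst \<and> jst \<le> k \<and> p jst \<le> tail_mass / tail_slots"
    unfolding jstar_def using k_pos
    by (intro LeastI[of "\<lambda>j. 1 \<le> j \<and> j \<le> k \<and> p j \<le> (\<Sum>i=j..n. p i) / real (k - j + 1)" k]) simp
  then show "1 \<le> jst" "jst \<le> k" "p jst \<le> tail_mass / tail_slots" by blast+
qed

lemma head_tail_partition: "head \<inter> tail = {}" "head \<union> tail = {1..n}"
  using jstar_props(1,2) k_less_n by auto

lemma card_head: "card head + tail_slots = k"
  using jstar_props(1,2) by simp

lemma tail_mass_pos: "0 < tail_mass"
  using p_pos jstar_props(1,2) k_less_n by (intro sum_pos) auto

lemma head_mass_plus_tail_mass: "sum p head + tail_mass = 1"
  using p_sum head_tail_partition by (metis finite_atLeastAtMost sum.union_disjoint)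

lemma Mstar_decompose:
  assumes "M \<in> Mstar k n p"
  shows "M = head \<union> (M \<inter> tail)" "card (M \<inter> tail) = tail_slots" "finite M"
proof -
  have M: "M \<subseteq> head \<union> tail" "card M = k" "head \<subseteq> M"
    using assms head_tail_partition unfolding Mstar_def by auto
  then show "M = head \<union> (M \<inter> tail)" by auto
  show "finite M" using M(1) finite_subset by blast
  then have "card M = card head + card (M \<inter> tail)"
    using \<open>M = head \<union> (M \<inter> tail)\<close> head_tail_partition(1)
    by (metis card_Un_disjoint disjoint_iff finite_Int finite_atLeastAtMost IntD2)
  then show "card (M \<inter> tail) = tail_slots" using M(2) card_head by simp
qed

lemma bij_betw_Mstar_tail_subsets:
  assumes "i \<in> tail"
  shows "bij_betw (\<lambda>M. M \<inter> tail) {M \<in> Mstar k n p. i \<in> M}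
           {A. A \<subseteq> tail \<and> card A = tail_slots \<and> i \<in> A}"
proof (rule bij_betw_byWitness[where f' = "\<lambda>A. head \<union> A"])
  have "head \<union> A \<in> Mstar k n p" if "A \<subseteq> tail" "card A = tail_slots" for A
  proof -
    have "head \<inter> A = {}" using that(1) head_tail_partition(1) by blast
    then have "card (head \<union> A) = k"
      using that card_head finite_subset[OF that(1)] by (subst card_Un_disjoint) auto
    then show ?thesis using that head_tail_partition(2) unfolding Mstar_def by auto
  qed
  then show "(\<lambda>A. head \<union> A) ` {A. A \<subseteq> tail \<and> card A = tail_slots \<and> i \<in> A} \<subseteq> {M \<in> Mstar k n p. i \<in> M}"
    by auto
  show "\<forall>M\<in>{M \<in> Mstar k n p. i \<in> M}. head \<union> (M \<inter> tail) = M" using Mstar_decompose(1) by blast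
  show "\<forall>A\<in>{A. A \<subseteq> tail \<and> card A = tail_slots \<and> i \<in> A}. (head \<union> A) \<inter> tail = A"
    using head_tail_partition(1) by blast
  show "(\<lambda>M. M \<inter> tail) ` {M \<in> Mstar k n p. i \<in> M} \<subseteq> {A. A \<subseteq> tail \<and> card A = tail_slots \<and> i \<in> A}"
    using Mstar_decompose(2) assms by auto
qed

lemma solution_exists: "\<exists>v. is_solution k n p v"
proof -
  have "p i \<le> tail_mass / tail_slots" if "i \<in> tail" for i
    using that p_antimono[of jst i] jstar_props by force
  then have "msubset_mixture tail tail_slots p"
    using p_pos jstar_props(1)
    by (intro msubset_mixture_if_bounded[where h = "tail_mass / tail_slots"]) (auto intro: less_imp_le)
  then obtain v where v: "\<forall>A. 0 \<le> v A"
    "\<forall>i\<in>tail. (\<Sum>A\<in>{A. A \<subseteq> tail \<and> card A = tail_slots \<and> i \<in> A}. v A) = p i"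
    unfolding msubset_mixture_def by blast
  have "(\<Sum>M\<in>{M \<in> Mstar k n p. i \<in> M}. v (M \<inter> tail)) = p i" if "i \<in> tail" for i
    using sum.reindex_bij_betw[OF bij_betw_Mstar_tail_subsets[OF that], of v] v(2) that by simp
  then have "is_solution k n p (\<lambda>M. v (M \<inter> tail))"
    unfolding is_solution_def using v(1) by blast
  then show ?thesis by blast
qed

lemma mset_pivec:
  "mset (pivec k n p) = image_mset p (mset_set head) + replicate_mset tail_slots (tail_mass / tail_slots)"
proof -
  define f where "f = (\<lambda>l. if l \<le> jst - 1 then p l else tail_mass / tail_slots)"
  have "{1..k} = head \<union> {jst..k}" "head \<inter> {jst..k} = {}" using jstar_props(1,2) by auto
  then have "mset (pivec k n p) = image_mset f (mset_set head) + image_mset f (mset_set {jst..k})"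
    unfolding pivec_def f_def[symmetric] mset_map_upt_Suc by (simp add: mset_set_Union)
  also have "image_mset f (mset_set head) = image_mset p (mset_set head)"
    by (intro image_mset_cong) (auto simp: f_def)
  also have "image_mset f (mset_set {jst..k}) = replicate_mset tail_slots (tail_mass / tail_slots)"
    using jstar_props(1,2) by (subst image_mset_cong[where g = "\<lambda>_. tail_mass / tail_slots"])
      (auto simp: f_def image_mset_const_eq Suc_diff_le)
  finally show ?thesis .
qed

lemma prob_vec_pivec: "prob_vec (pivec k n p)"
proof -
  have "sum_list (pivec k n p) = sum_mset (mset (pivec k n p))" by (rule sum_mset_sum_list[symmetric])
  also have "\<dots> = sum p head + real tail_slots * (tail_mass / tail_slots)"
    unfolding mset_pivec sum_mset.union sum_unfold_sum_mset sum_mset_replicate_mset ..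
  also have "\<dots> = sum p head + tail_mass" by simp
  finally have "sum_list (pivec k n p) = 1" using head_mass_plus_tail_mass by simp
  moreover have "\<forall>x\<in>set (pivec k n p). 0 \<le> x"
    using p_pos tail_mass_pos jstar_props(2) k_less_n unfolding pivec_def by (force intro: less_imp_le)
  ultimately show ?thesis unfolding prob_vec_def by simp
qed

end

locale prior_solution = ordered_prior +
  fixes v :: "nat set \<Rightarrow> real"
  assumes solution: "is_solution k n p v"
begin

lemma v_nonneg: "M \<in> Mstar k n p \<Longrightarrow> 0 \<le> v M"
  using solution unfolding is_solution_def by blast

lemma v_covers: "i \<in> tail \<Longrightarrow> (\<Sum>M\<in>{M \<in> Mstar k n p. i \<in> M}. v M) = p i"
  using solution unfolding is_solution_def by blast

lemma finite_Mstar: "finite (Mstar k n p)"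
  by (rule finite_subset[of _ "Pow {1..n}"]) (auto simp: Mstar_def)

lemma chan_head: "x \<in> head \<Longrightarrow> chan k n p v x M = v M * tail_slots / tail_mass"
  unfolding chan_def by auto

lemma chan_tail: "x \<in> tail \<Longrightarrow> chan k n p v x M = (if x \<in> M then v M / p x else 0)"
  unfolding chan_def by auto

lemma total_weight: "real tail_slots * sum v (Mstar k n p) = tail_mass"
proof -
  have "tail_mass = (\<Sum>i\<in>tail. \<Sum>M\<in>Mstar k n p. if i \<in> M then v M else 0)"
    using v_covers finite_Mstar by (simp add: sum.inter_filter)
  also have "\<dots> = (\<Sum>M\<in>Mstar k n p. \<Sum>i\<in>tail. if i \<in> M then v M else 0)"
    by (rule sum.swap)
  also have "\<dots> = (\<Sum>M\<in>Mstar k n p. real tail_slots * v M)"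
  proof (rule sum.cong[OF refl])
    fix M assume "M \<in> Mstar k n p"
    have "(\<Sum>i\<in>tail. if i \<in> M then v M else 0) = real (card (tail \<inter> M)) * v M"
      by (simp add: sum.If_cases)
    then show "(\<Sum>i\<in>tail. if i \<in> M then v M else 0) = real tail_slots * v M"
      using Mstar_decompose(2)[OF \<open>M \<in> Mstar k n p\<close>] by (simp add: Int_commute)
  qed
  finally show ?thesis by (simp add: sum_distrib_left)
qed

lemma is_channel: "is_channel n (Mstar k n p) (chan k n p v)"
  unfolding is_channel_def
proof
  fix x assume x: "x \<in> {1..n}"
  then consider "x \<in> head" | "x \<in> tail" using head_tail_partition(2) by blast
  then show "(\<forall>M\<in>Mstar k n p. 0 \<le> chan k n p v x M) \<and> (\<Sum>M\<in>Mstar k n p. chan k n p v x M) = 1"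
  proof cases
    case 1
    have "(\<Sum>M\<in>Mstar k n p. chan k n p v x M) = real tail_slots * sum v (Mstar k n p) / tail_mass"
      using chan_head[OF 1] by (simp add: sum_divide_distrib sum_distrib_right mult.commute)
    then show ?thesis using chan_head[OF 1] v_nonneg tail_mass_pos total_weight by simp
  next
    case 2
    have "(\<Sum>M\<in>Mstar k n p. chan k n p v x M) = (\<Sum>M\<in>{M \<in> Mstar k n p. x \<in> M}. v M) / p x"
      using chan_tail[OF 2] finite_Mstar by (simp add: sum.inter_filter[symmetric] sum_divide_distrib)
    then show ?thesis using chan_tail[OF 2] v_covers[OF 2] v_nonneg p_pos[OF x] by simp
  qed
qed

lemma feasible: "feasible k n (Mstar k n p) (chan k n p v)"
  unfolding feasible_def
proof
  fix M assume M: "M \<in> Mstar k n p"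
  have "x \<in> M" if "x \<in> {1..n}" "0 < chan k n p v x M" for x
  proof (cases "x \<in> head")
    case True
    then show ?thesis using M unfolding Mstar_def by blast
  next
    case False
    then have "x \<in> tail" using that(1) by simp
    then show ?thesis using that(2) chan_tail[of x M] by (auto split: if_splits)
  qed
  then have "{x\<in>{1..n}. 0 < chan k n p v x M} \<subseteq> M" by blast
  then have "card {x\<in>{1..n}. 0 < chan k n p v x M} \<le> card M"
    using Mstar_decompose(3)[OF M] by (rule card_mono[rotated])
  then show "card {x\<in>{1..n}. 0 < chan k n p v x M} \<le> k" using M unfolding Mstar_def by simp
qed

lemma out_prob_eq:
  assumes M: "M \<in> Mstar k n p"
  shows "out_prob n p (chan k n p v) M = v M * tail_slots / tail_mass"
proof -
  have "out_prob n p (chan k n p v) M = (\<Sum>x\<in>head \<union> tail. p x * chan k n p v x M)"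
    unfolding out_prob_def head_tail_partition(2) ..
  also have "\<dots> = (\<Sum>x\<in>head. p x * chan k n p v x M) + (\<Sum>x\<in>tail. p x * chan k n p v x M)"
    using head_tail_partition(1) by (intro sum.union_disjoint) auto
  also have "(\<Sum>x\<in>head. p x * chan k n p v x M) = sum p head * (v M * tail_slots / tail_mass)"
    using chan_head by (simp add: sum_distrib_right sum_divide_distrib)
  also have "(\<Sum>x\<in>tail. p x * chan k n p v x M) = (\<Sum>x\<in>tail. if x \<in> M then v M else 0)"
  proof (rule sum.cong[OF refl])
    fix x assume "x \<in> tail"
    then show "p x * chan k n p v x M = (if x \<in> M then v M else 0)"
      using chan_tail p_pos[of x] jstar_props(1) by auto
  qed
  also have "\<dots> = real tail_slots * v M"
    using Mstar_decompose(2)[OF M] by (simp add: sum.If_cases Int_commute)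
  also have "sum p head * (v M * tail_slots / tail_mass) + real tail_slots * v M
      = (sum p head + tail_mass) * (v M * tail_slots / tail_mass)"
    using tail_mass_pos by (simp add: field_simps)
  finally show ?thesis using head_mass_plus_tail_mass by simp
qed

lemma posterior_eq:
  assumes M: "M \<in> Mstar k n p" and "0 < v M"
  shows "posterior n p (chan k n p v) M =
    map (\<lambda>x. if x \<in> head then p x else if x \<in> M then tail_mass / tail_slots else 0) [1..<Suc n]"
  unfolding posterior_def out_prob_eq[OF M]
proof (rule map_cong[OF refl])
  fix x assume "x \<in> set [1..<Suc n]"
  then consider "x \<in> head" | "x \<in> tail" "x \<notin> head" using jstar_props(1) by fastforce
  then show "p x * chan k n p v x M / (v M * tail_slots / tail_mass) =
      (if x \<in> head then p x else if x \<in> M then tail_mass / tail_slots else 0)"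
  proof cases
    case 1
    then show ?thesis using chan_head[OF 1] \<open>0 < v M\<close> tail_mass_pos by simp
  next
    case 2
    then show ?thesis using chan_tail[OF 2(1)] \<open>0 < v M\<close> tail_mass_pos p_pos[of x] jstar_props(1)
      by auto
  qed
qed

lemma mset_posterior:
  assumes M: "M \<in> Mstar k n p" and "0 < v M"
  shows "mset (posterior n p (chan k n p v) M) = mset (pivec k n p) + replicate_mset (n - k) 0"
proof -
  define g where "g = (\<lambda>x. if x \<in> head then p x else if x \<in> M then tail_mass / tail_slots else 0)"
  have "{1..n} = head \<union> ((M \<inter> tail) \<union> (tail - M))" using head_tail_partition(2) by blast
  moreover have "head \<inter> ((M \<inter> tail) \<union> (tail - M)) = {}" "(M \<inter> tail) \<inter> (tail - M) = {}"
    using head_tail_partition(1) by blast+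
  ultimately have "mset_set {1..n} = mset_set head + (mset_set (M \<inter> tail) + mset_set (tail - M))"
    by (simp add: mset_set_Union)
  then have "mset (posterior n p (chan k n p v) M) =
      image_mset g (mset_set head) + (image_mset g (mset_set (M \<inter> tail)) + image_mset g (mset_set (tail - M)))"
    unfolding posterior_eq[OF assms] g_def[symmetric] mset_map_upt_Suc by simp
  also have "image_mset g (mset_set head) = image_mset p (mset_set head)"
    by (intro image_mset_cong) (simp add: g_def)
  also have "image_mset g (mset_set (M \<inter> tail)) = replicate_mset tail_slots (tail_mass / tail_slots)"
    using head_tail_partition(1) Mstar_decompose(2)[OF M]
    by (subst image_mset_cong[where g = "\<lambda>_. tail_mass / tail_slots"]) (auto simp: g_def image_mset_const_eq)
  also have "image_mset g (mset_set (tail - M)) = replicate_mset (n - k) 0"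
  proof -
    have "card (tail - M) = card tail - card (M \<inter> tail)"
      by (metis Int_commute card_Diff_subset_Int finite_Int finite_atLeastAtMost)
    then have "card (tail - M) = n - k"
      using Mstar_decompose(2)[OF M] jstar_props(2) k_less_n by simp
    then show ?thesis
      using head_tail_partition(1)
      by (subst image_mset_cong[where g = "\<lambda>_. 0"]) (auto simp: g_def image_mset_const_eq)
  qed
  finally show ?thesis unfolding mset_pivec by (simp add: ac_simps)
qed

lemma cond_entropy_eq:
  assumes "gen_entropy \<eta> F"
  shows "cond_entropy \<eta> F n p (Mstar k n p) (chan k n p v) = entropy \<eta> F (pivec k n p)"
proof -
  let ?out = "out_prob n p (chan k n p v)"
  let ?post = "posterior n p (chan k n p v)"
  have out_nonneg: "0 \<le> ?out M" if "M \<in> Mstar k n p" for M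
    using out_prob_eq[OF that] v_nonneg[OF that] tail_mass_pos by simp
  have "F (?post M) = F (pivec k n p)" if "M \<in> Mstar k n p" "0 < ?out M" for M
  proof -
    have "0 < v M" using that out_prob_eq[OF that(1)] v_nonneg[OF that(1)] tail_mass_pos
      by (simp add: zero_less_mult_iff zero_less_divide_iff)
    then show ?thesis
      using assms prob_vec_pivec mset_posterior[OF that(1)] unfolding gen_entropy_def
      by (blast intro: F_eq_if_mset_eq_append_zeros)
  qed
  then have "(\<Sum>M\<in>{M \<in> Mstar k n p. 0 < ?out M}. ?out M * F (?post M))
      = (\<Sum>M\<in>{M \<in> Mstar k n p. 0 < ?out M}. ?out M) * F (pivec k n p)"
    by (simp add: sum_distrib_right)
  also have "(\<Sum>M\<in>{M \<in> Mstar k n p. 0 < ?out M}. ?out M) = (\<Sum>M\<in>Mstar k n p. ?out M)"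
    using finite_Mstar out_nonneg by (intro sum.mono_neutral_left) force+
  also have "\<dots> = real tail_slots * sum v (Mstar k n p) / tail_mass"
    using out_prob_eq by (simp add: sum_divide_distrib sum_distrib_right mult.commute)
  also have "\<dots> = 1" using total_weight tail_mass_pos by simp
  finally show ?thesis unfolding cond_entropy_def entropy_def by simp
qed
end

theorem lemma2:
  fixes n k :: nat and p :: "nat \<Rightarrow> real"
  assumes "0 < k" and "k < n"
    and "(\<Sum>i=1..n. p i) = 1"
    and "\<And>i j. 1 \<le> i \<Longrightarrow> i \<le> j \<Longrightarrow> j \<le> n \<Longrightarrow> p j \<le> p i"
    and "0 < p n"
  shows "(\<exists>v. is_solution k n p v) \<and>
         (\<forall>v. is_solution k n p v \<longrightarrow>
            is_channel n (Mstar k n p) (chan k n p v) \<and>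
            feasible k n (Mstar k n p) (chan k n p v) \<and>
            (\<forall>\<eta> F. gen_entropy \<eta> F \<longrightarrow>
               cond_entropy \<eta> F n p (Mstar k n p) (chan k n p v) = entropy \<eta> F (pivec k n p)))"
proof -
  interpret ordered_prior n k p using assms by unfold_locales
  have "is_channel n (Mstar k n p) (chan k n p v) \<and> feasible k n (Mstar k n p) (chan k n p v) \<and>
      (\<forall>\<eta> F. gen_entropy \<eta> F \<longrightarrow>
         cond_entropy \<eta> F n p (Mstar k n p) (chan k n p v) = entropy \<eta> F (pivec k n p))"
    if "is_solution k n p v" for v
  proof -
    interpret prior_solution n k p v using that by unfold_locales
    show ?thesis using is_channel feasible cond_entropy_eq by blast
  qed
  then show ?thesis using solution_exists by blast
qed

end
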